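(* Let $N\ge1$ and let $Z_1,\dots,Z_{2N+1}$ be i.i.d. $N(0,1)$. Set $\widehat Z:=\frac1{\sqrt{N+1}}\sum_{i=1}^{N+1}Z_{N+i}$, $\check{\mathcal Z}:=\frac1{\sqrt N}\sum_{i=1}^NZ_i$, $\widetilde{\mathcal Z}:=\frac1{\sqrt N}\sum_{i=1}^N\frac{Z_i^2-1}{\sqrt2}$ and $\Delta:=(\widehat Z,\check{\mathcal Z},\widetilde{\mathcal Z})^{\prime}$. Then for any $w=(w_1,w_2,w_3)\in\mathbb R^3$, $$\Big|\mathbb E\big(e^{iw^{\prime}\Delta}\big)-e^{-\|w\|^2/2}\Big|\le\epsilon(w)\,e^{-\|w\|^2/2},$$ where $$\epsilon(w):=|w_3|\sqrt{\tfrac2N}\Big(\tfrac{w_2^2}2+w_3^2\Big)\exp\Big(|w_3|\sqrt{\tfrac2N}\Big(\tfrac{w_2^2}2+w_3^2\Big)\Big).$$ *)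

theory Defs
  imports "HOL-Probability.Probability"
begin

definition Zhat :: "nat \<Rightarrow> (nat \<Rightarrow> 'a \<Rightarrow> real) \<Rightarrow> 'a \<Rightarrow> real" where
  "Zhat N Z x = (\<Sum>i=1..N+1. Z (N+i) x) / sqrt (real N + 1)"

definition Zcheck :: "nat \<Rightarrow> (nat \<Rightarrow> 'a \<Rightarrow> real) \<Rightarrow> 'a \<Rightarrow> real" where
  "Zcheck N Z x = (\<Sum>i=1..N. Z i x) / sqrt (real N)"

definition Ztilde :: "nat \<Rightarrow> (nat \<Rightarrow> 'a \<Rightarrow> real) \<Rightarrow> 'a \<Rightarrow> real" where
  "Ztilde N Z x = (\<Sum>i=1..N. ((Z i x)^2 - 1) / sqrt 2) / sqrt (real N)"

definition eps_bound :: "nat \<Rightarrow> real \<Rightarrow> real \<Rightarrow> real \<Rightarrow> real" where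
  "eps_bound N w1 w2 w3 =
     (let a = \<bar>w3\<bar> * sqrt (2 / real N) * (w2^2 / 2 + w3^2) in a * exp a)"

end

theory Submission
  imports Defs "HOL-Real_Asymp.Real_Asymp"
begin

(* For a standard normal X, the characteristic function of (X, X^2) at (a, c) is
   (1 - 2ic)^(-1/2) exp (-a^2 / (2 (1 - 2ic))). We obtain it by differentiating in c:
   Stein's identity E[X g(X)] = E[g'(X)] expresses E[X^2 e^(i(aX + cX^2))] through
   E[e^(i(aX + cX^2))], so the product of the latter with the reciprocal of the claimed
   closed form has derivative zero.
   By independence, the characteristic function of Delta is a product of N such factors,
   with a = w2/sqrt N and c = w3/sqrt(2N), and N + 1 Gaussian factors; it equals
   exp(-|w|^2/2) exp D, where D is N times the remainder of the second order expansion of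
   the exponent at c = 0. That remainder is at most 4|c|^3 + a^2|c|, so |D| is bounded by
   the exponent in eps(w), and |exp D - 1| <= |D| exp |D| gives the claim. *)

section \<open>Gaussian integrals with a quadratic phase\<close>

definition quad_phase :: "real \<Rightarrow> real \<Rightarrow> real \<Rightarrow> complex" where
  "quad_phase a c x = exp (\<i> * complex_of_real (c * x^2 + a * x))"

definition normal_quad_moment :: "real \<Rightarrow> real \<Rightarrow> nat \<Rightarrow> complex" where
  "normal_quad_moment a c k =
     (\<integral>x. complex_of_real (std_normal_density x) * (complex_of_real x ^ k * quad_phase a c x) \<partial>lborel)"

lemma norm_quad_phase [simp]: "norm (quad_phase a c x) = 1"
  unfolding quad_phase_def by simp

lemma continuous_on_quad_phase: "continuous_on UNIV (quad_phase a c)"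
  unfolding quad_phase_def by (intro continuous_intros)

lemma borel_measurable_quad_phase [measurable]: "quad_phase a c \<in> borel_measurable borel"
  by (rule borel_measurable_continuous_onI[OF continuous_on_quad_phase])

lemma quad_phase_shift:
  "quad_phase a (c + h) x = quad_phase a c x * exp (\<i> * complex_of_real (h * x^2))"
  unfolding quad_phase_def by (simp add: exp_add[symmetric] algebra_simps)

lemma has_vector_derivative_quad_phase:
  "(quad_phase a c has_vector_derivative \<i> * complex_of_real (2 * c * x + a) * quad_phase a c x) (at x)"
proof -
  have "((\<lambda>x. c * x^2 + a * x) has_real_derivative 2 * c * x + a) (at x)"
    by (auto intro!: derivative_eq_intros)
  then have "((\<lambda>x. \<i> * complex_of_real (c * x^2 + a * x)) has_vector_derivative
      \<i> * complex_of_real (2 * c * x + a)) (at x)"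
    by (intro has_vector_derivative_mult_right has_vector_derivative_of_real)
  from field_vector_diff_chain_at[OF this DERIV_exp] show ?thesis
    unfolding quad_phase_def by (simp add: o_def)
qed

lemma integrable_normal_quad_moment:
  "integrable lborel
     (\<lambda>x. complex_of_real (std_normal_density x) * (complex_of_real x ^ k * quad_phase a c x))"
proof (rule Bochner_Integration.integrable_bound[OF integrable_std_normal_moment_abs[of k]])
  show "AE x in lborel. norm (complex_of_real (std_normal_density x) * (complex_of_real x ^ k * quad_phase a c x))
      \<le> norm (std_normal_density x * \<bar>x\<bar> ^ k)"
    by (auto simp: norm_mult norm_power)
qed measurable

lemma tendsto_normal_quad_moment_integrand:
  assumes "F = at_top \<or> F = at_bot"
  shows "((\<lambda>x. complex_of_real (std_normal_density x) * (complex_of_real x ^ k * quad_phase a c x))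
           \<longlongrightarrow> 0) F"
proof -
  have "((\<lambda>x. std_normal_density x * \<bar>x\<bar> ^ k) \<longlongrightarrow> 0) F"
    using assms unfolding std_normal_density_def by (elim disjE; simp; real_asymp)
  then show ?thesis
    by (subst tendsto_norm_zero_iff[symmetric]) (simp add: norm_mult norm_power)
qed

lemma std_normal_Stein_identity:
  fixes g g' :: "real \<Rightarrow> complex"
  assumes deriv: "\<And>x. (g has_vector_derivative g' x) (at x)"
    and cont: "continuous_on UNIV g'"
    and int_g': "integrable lborel (\<lambda>x. complex_of_real (std_normal_density x) * g' x)"
    and int_xg: "integrable lborel (\<lambda>x. complex_of_real (std_normal_density x) * (complex_of_real x * g x))"
    and lim_top: "((\<lambda>x. complex_of_real (std_normal_density x) * g x) \<longlongrightarrow> 0) at_top"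
    and lim_bot: "((\<lambda>x. complex_of_real (std_normal_density x) * g x) \<longlongrightarrow> 0) at_bot"
  shows "(\<integral>x. complex_of_real (std_normal_density x) * (complex_of_real x * g x) \<partial>lborel)
       = (\<integral>x. complex_of_real (std_normal_density x) * g' x \<partial>lborel)"
proof -
  define F' where "F' x = complex_of_real (std_normal_density x) * g' x
      - complex_of_real (std_normal_density x) * (complex_of_real x * g x)" for x
  have density_deriv: "(std_normal_density has_real_derivative - x * std_normal_density x) (at x)" for x
    unfolding std_normal_density_def[abs_def]
    by (auto intro!: derivative_eq_intros simp: field_simps power2_eq_square)
  have F': "((\<lambda>x. complex_of_real (std_normal_density x) * g x) has_vector_derivative F' x) (at x)" for x
    using has_vector_derivative_mult[OF has_vector_derivative_of_real[OF density_deriv] deriv]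
    unfolding F'_def by (simp add: algebra_simps)
  have "continuous_on UNIV g"
    using deriv by (meson continuous_at_imp_continuous_on has_vector_derivative_continuous)
  then have "isCont F' x" for x
    unfolding F'_def using cont
    by (auto simp: continuous_on_eq_continuous_at std_normal_density_def[abs_def] intro!: continuous_intros)
  moreover have "set_integrable lborel (einterval (- \<infinity>) \<infinity>) F'"
    using Bochner_Integration.integrable_diff[OF int_g' int_xg] by (simp add: set_integrable_def F'_def)
  ultimately have "(LBINT x=-\<infinity>..\<infinity>. F' x) = 0 - 0"
    using F' lim_top lim_bot
    by (intro interval_integral_FTC_integrable) (auto simp: ereal_tendsto_simps1)
  then have "integral\<^sup>L lborel F' = 0"
    by (simp add: interval_lebesgue_integral_def set_lebesgue_integral_def)
  then show ?thesis
    unfolding F'_def using int_g' int_xg by (simp add: Bochner_Integration.integral_diff)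
qed

lemma normal_quad_moment_recurrence:
  "(1 - 2 * \<i> * complex_of_real c) * normal_quad_moment a c (Suc k)
     = of_nat k * normal_quad_moment a c (k - 1) + \<i> * complex_of_real a * normal_quad_moment a c k"
proof -
  let ?\<phi> = "\<lambda>x. complex_of_real (std_normal_density x)"
  let ?m = "\<lambda>j x. ?\<phi> x * (complex_of_real x ^ j * quad_phase a c x)"
  define g where "g x = complex_of_real x ^ k * quad_phase a c x" for x
  define g' where "g' x = of_nat k * complex_of_real x ^ (k - 1) * quad_phase a c x
      + complex_of_real x ^ k * (\<i> * complex_of_real (2 * c * x + a) * quad_phase a c x)" for x
  have g'_split: "?\<phi> x * g' x = of_nat k * ?m (k - 1) x + 2 * \<i> * c * ?m (Suc k) x + \<i> * a * ?m k x" for x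
    unfolding g'_def by (simp add: algebra_simps)
  have xg: "(\<lambda>x. ?\<phi> x * (complex_of_real x * g x)) = ?m (Suc k)"
    unfolding g_def by (simp add: fun_eq_iff mult.assoc)
  have "(\<integral>x. ?\<phi> x * (complex_of_real x * g x) \<partial>lborel) = (\<integral>x. ?\<phi> x * g' x \<partial>lborel)"
  proof (rule std_normal_Stein_identity)
    show "(g has_vector_derivative g' x) (at x)" for x
    proof -
      have "((\<lambda>x. x ^ k) has_real_derivative real k * x ^ (k - 1)) (at x)"
        using DERIV_pow[of k x] by simp
      then have "((\<lambda>x. complex_of_real (x ^ k)) has_vector_derivative complex_of_real (real k * x ^ (k - 1))) (at x)"
        by (rule has_vector_derivative_of_real)
      from has_vector_derivative_mult[OF this has_vector_derivative_quad_phase] show ?thesis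
        unfolding g_def g'_def by (simp add: algebra_simps)
    qed
    show "continuous_on UNIV g'"
      unfolding g'_def using continuous_on_quad_phase by (intro continuous_intros)
    show "integrable lborel (\<lambda>x. ?\<phi> x * g' x)"
      unfolding g'_split by (intro Bochner_Integration.integrable_add integrable_mult_right integrable_normal_quad_moment)
    show "integrable lborel (\<lambda>x. ?\<phi> x * (complex_of_real x * g x))"
      unfolding xg by (rule integrable_normal_quad_moment)
  qed (use tendsto_normal_quad_moment_integrand in \<open>simp_all add: g_def\<close>)
  then have "normal_quad_moment a c (Suc k) = (\<integral>x. ?\<phi> x * g' x \<partial>lborel)"
    unfolding xg normal_quad_moment_def .
  also have "\<dots> = of_nat k * normal_quad_moment a c (k - 1) + 2 * \<i> * c * normal_quad_moment a c (Suc k)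
      + \<i> * a * normal_quad_moment a c k"
    unfolding g'_split normal_quad_moment_def
    by (simp del: power_Suc add: integrable_normal_quad_moment)
  finally show ?thesis by (simp add: algebra_simps)
qed

lemma normal_quad_moment_2:
  "(1 - 2 * \<i> * complex_of_real c)^2 * normal_quad_moment a c 2
     = (1 - 2 * \<i> * complex_of_real c - complex_of_real a ^ 2) * normal_quad_moment a c 0"
proof -
  let ?s = "1 - 2 * \<i> * complex_of_real c" and ?M = "normal_quad_moment a c"
  have M1: "?s * ?M 1 = \<i> * a * ?M 0"
    using normal_quad_moment_recurrence[of c a 0] by simp
  have M2: "?s * ?M 2 = ?M 0 + \<i> * a * ?M 1"
    using normal_quad_moment_recurrence[of c a 1] by (simp add: numeral_2_eq_2)
  have "?s^2 * ?M 2 = ?s * (?s * ?M 2)"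
    by (simp add: power2_eq_square)
  also have "\<dots> = ?s * ?M 0 + \<i> * a * (?s * ?M 1)"
    unfolding M2 by (simp add: algebra_simps)
  also have "\<dots> = (?s - complex_of_real a ^ 2) * ?M 0"
    unfolding M1 by (simp add: algebra_simps power2_eq_square)
  finally show ?thesis .
qed

lemma has_vector_derivative_of_quadratic_remainder:
  fixes f :: "real \<Rightarrow> 'a::real_normed_vector"
  assumes "\<And>h. norm (f (x + h) - f x - h *\<^sub>R D) \<le> K * h^2"
  shows "(f has_vector_derivative D) (at x)"
proof -
  have "((\<lambda>h. norm (f (x + h) - f x - h *\<^sub>R D) / norm h) \<longlongrightarrow> 0) (at 0)"
  proof (rule Lim_null_comparison)
    have "norm (f (x + h) - f x - h *\<^sub>R D) / norm h \<le> \<bar>K\<bar> * \<bar>h\<bar>" for h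
    proof (cases "h = 0")
      case False
      have "norm (f (x + h) - f x - h *\<^sub>R D) / norm h \<le> K * h^2 / \<bar>h\<bar>"
        using assms by (simp add: divide_right_mono)
      also have "\<dots> = K * \<bar>h\<bar> * \<bar>h\<bar> / \<bar>h\<bar>"
        by (simp add: power2_eq_square mult.assoc)
      also have "\<dots> = K * \<bar>h\<bar>"
        using False by simp
      also have "\<dots> \<le> \<bar>K\<bar> * \<bar>h\<bar>"
        by (simp add: mult_right_mono)
      finally show ?thesis .
    qed simp
    then show "\<forall>\<^sub>F h in at 0. norm (norm (f (x + h) - f x - h *\<^sub>R D) / norm h) \<le> \<bar>K\<bar> * \<bar>h\<bar>"
      by simp
    show "((\<lambda>h. \<bar>K\<bar> * \<bar>h\<bar>) \<longlongrightarrow> 0) (at 0)"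
      by (intro tendsto_eq_intros) auto
  qed
  then show ?thesis
    unfolding has_vector_derivative_def has_derivative_at by (auto intro: bounded_linear_scaleR_left)
qed

lemma normal_quad_moment_increment:
  "norm (normal_quad_moment a (c + h) 0 - normal_quad_moment a c 0 - h *\<^sub>R (\<i> * normal_quad_moment a c 2))
     \<le> (\<integral>x. std_normal_density x * x ^ 4 \<partial>lborel) / 2 * h^2"
proof -
  let ?\<phi> = "\<lambda>x. complex_of_real (std_normal_density x)"
  let ?e = "\<lambda>x. exp (\<i> * complex_of_real (h * x^2)) - 1 - \<i> * complex_of_real (h * x^2)"
  let ?f = "\<lambda>x. ?\<phi> x * (quad_phase a c x * ?e x)"
  have int_4: "integrable lborel (\<lambda>x. std_normal_density x * x ^ 4)"
    by (rule integrable_std_normal_moment)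
  have "normal_quad_moment a (c + h) 0 - normal_quad_moment a c 0 - h *\<^sub>R (\<i> * normal_quad_moment a c 2)
      = (\<integral>x. ?\<phi> x * (complex_of_real x ^ 0 * quad_phase a (c + h) x)
            - ?\<phi> x * (complex_of_real x ^ 0 * quad_phase a c x)
            - (complex_of_real h * \<i>) * (?\<phi> x * (complex_of_real x ^ 2 * quad_phase a c x)) \<partial>lborel)"
    unfolding normal_quad_moment_def
    by (subst Bochner_Integration.integral_diff,
        (intro Bochner_Integration.integrable_diff integrable_normal_quad_moment integrable_mult_right)+)
       (subst Bochner_Integration.integral_diff, (intro integrable_normal_quad_moment)+,
        simp add: scaleR_conv_of_real mult.assoc)
  also have "\<dots> = (\<integral>x. ?f x \<partial>lborel)"
    by (intro Bochner_Integration.integral_cong refl) (simp add: quad_phase_shift algebra_simps)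
  finally have eq: "normal_quad_moment a (c + h) 0 - normal_quad_moment a c 0
      - h *\<^sub>R (\<i> * normal_quad_moment a c 2) = (\<integral>x. ?f x \<partial>lborel)" .
  have bound: "norm (?f x) \<le> h^2 / 2 * (std_normal_density x * x ^ 4)" for x
  proof -
    have "norm (?e x) \<le> \<bar>h * x^2\<bar> ^ 2 / 2"
      using iexp_approx1[of "h * x^2" 1] by (simp add: diff_diff_eq power2_eq_square)
    then have "std_normal_density x * norm (?e x) \<le> std_normal_density x * (\<bar>h * x^2\<bar> ^ 2 / 2)"
      by (rule mult_left_mono) simp
    then show ?thesis
      by (simp add: norm_mult power_mult_distrib power2_abs mult_ac flip: power_mult)
  qed
  have "norm (\<integral>x. ?f x \<partial>lborel) \<le> (\<integral>x. norm (?f x) \<partial>lborel)"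
    by (rule integral_norm_bound)
  also have "\<dots> \<le> (\<integral>x. h^2 / 2 * (std_normal_density x * x ^ 4) \<partial>lborel)"
  proof (rule integral_mono)
    show "integrable lborel (\<lambda>x. norm (?f x))"
    proof (intro integrable_norm Bochner_Integration.integrable_bound[OF integrable_mult_right[OF int_4, of "h^2 / 2"]])
      show "AE x in lborel. norm (?f x) \<le> norm (h^2 / 2 * (std_normal_density x * x ^ 4))"
        using bound by (auto intro: order_trans)
    qed measurable
  qed (use int_4 bound in auto)
  finally show ?thesis
    using eq by (simp add: mult.commute)
qed

lemma has_vector_derivative_normal_quad_moment:
  "((\<lambda>c. normal_quad_moment a c 0) has_vector_derivative \<i> * normal_quad_moment a c 2) (at c)"
  by (rule has_vector_derivative_of_quadratic_remainder[OF normal_quad_moment_increment])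

lemma normal_quad_moment_linear: "normal_quad_moment a 0 0 = exp (- (a^2) / 2)"
proof -
  have "normal_quad_moment a 0 0 = (\<integral>x. std_normal_density x *\<^sub>R iexp (a * x) \<partial>lborel)"
    unfolding normal_quad_moment_def quad_phase_def by (simp add: scaleR_conv_of_real)
  also have "\<dots> = char std_normal_distribution a"
    unfolding char_def by (subst integral_density) auto
  finally show ?thesis
    by (simp add: char_std_normal_distribution)
qed

definition quad_char_exponent :: "real \<Rightarrow> complex \<Rightarrow> complex" where
  "quad_char_exponent a z = Ln (1 - 2 * \<i> * z) / 2 + complex_of_real a ^ 2 / 2 * inverse (1 - 2 * \<i> * z)"

lemma norm_one_minus_2i_of_real_ge_1: "1 \<le> norm (1 - 2 * \<i> * complex_of_real c)"
  using abs_Re_le_cmod[of "1 - 2 * \<i> * complex_of_real c"] by simp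

lemma one_minus_2i_of_real_neq_0: "1 - 2 * \<i> * complex_of_real c \<noteq> 0"
  using norm_one_minus_2i_of_real_ge_1[of c] by auto

lemma one_minus_2i_of_real_notin_nonpos_Reals: "1 - 2 * \<i> * complex_of_real c \<notin> \<real>\<^sub>\<le>\<^sub>0"
  by (auto simp: nonpos_Reals_def complex_eq_iff)

lemma has_field_derivative_quad_char_exponent:
  "(quad_char_exponent a has_field_derivative
     - \<i> * (1 - 2 * \<i> * complex_of_real c - complex_of_real a ^ 2) / (1 - 2 * \<i> * complex_of_real c)^2)
     (at (complex_of_real c))"
proof -
  let ?s = "1 - 2 * \<i> * complex_of_real c"
  have s: "((\<lambda>z. 1 - 2 * \<i> * z) has_field_derivative - 2 * \<i>) (at (complex_of_real c))"
    by (auto intro!: derivative_eq_intros)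
  have "(quad_char_exponent a has_field_derivative
      inverse ?s * (- 2 * \<i>) / 2 + complex_of_real a ^ 2 / 2 * - (inverse ?s * (- 2 * \<i>) * inverse ?s))
      (at (complex_of_real c))"
    unfolding quad_char_exponent_def[abs_def]
    by (intro DERIV_add DERIV_cdivide DERIV_cmult DERIV_inverse' s one_minus_2i_of_real_neq_0
          DERIV_chain2[OF has_field_derivative_Ln[OF one_minus_2i_of_real_notin_nonpos_Reals[of c]] s])
  moreover have "inverse s * (- 2 * \<i>) / 2 + b / 2 * - (inverse s * (- 2 * \<i>) * inverse s)
      = - \<i> * (s - b) / s^2" if "s \<noteq> 0" for s b :: complex
    using that by (simp add: field_simps power2_eq_square)
  ultimately show ?thesis
    using one_minus_2i_of_real_neq_0[of c] by simp
qed

lemma normal_quad_moment_0_eq: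
  "normal_quad_moment a c 0 = exp (- quad_char_exponent a (complex_of_real c))"
proof -
  define K where "K c = normal_quad_moment a c 0 * exp (quad_char_exponent a (complex_of_real c))" for c
  have "(K has_vector_derivative 0) (at c)" for c
  proof -
    let ?s = "1 - 2 * \<i> * complex_of_real c" and ?M = "normal_quad_moment a c"
    let ?E = "exp (quad_char_exponent a (complex_of_real c))"
    let ?P' = "- \<i> * (?s - complex_of_real a ^ 2) / ?s^2"
    have "((\<lambda>c. complex_of_real c) has_vector_derivative 1) (at c)"
      using has_vector_derivative_of_real[OF DERIV_ident] by simp
    from field_vector_diff_chain_at[OF this DERIV_chain2[OF DERIV_exp has_field_derivative_quad_char_exponent]]
    have "((\<lambda>c. exp (quad_char_exponent a (complex_of_real c))) has_vector_derivative ?E * ?P') (at c)"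
      by (simp add: o_def)
    from has_vector_derivative_mult[OF has_vector_derivative_normal_quad_moment this]
    have "(K has_vector_derivative ?M 0 * (?E * ?P') + \<i> * ?M 2 * ?E) (at c)"
      unfolding K_def[abs_def] .
    moreover have M2: "?M 2 = (?s - complex_of_real a ^ 2) * ?M 0 / ?s^2"
      using normal_quad_moment_2[of c a] one_minus_2i_of_real_neq_0[of c] by (simp add: field_simps)
    moreover have "?M 0 * (?E * ?P') + \<i> * ?M 2 * ?E = 0"
      using one_minus_2i_of_real_neq_0[of c] by (simp add: M2 field_simps)
    ultimately show ?thesis
      by simp
  qed
  then have "K c = K 0"
    using has_derivative_zero_constant[of UNIV K] by (fastforce simp: has_vector_derivative_def)
  also have "K 0 = 1"
    unfolding K_def normal_quad_moment_linear quad_char_exponent_def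
    by (simp add: exp_of_real[symmetric] exp_add[symmetric])
  finally show ?thesis
    unfolding K_def by (simp add: exp_minus field_simps)
qed

lemma std_normal_char_quadratic:
  "(\<integral>y. std_normal_density y *\<^sub>R cis (a * y + c * (y^2 - 1)) \<partial>lborel)
     = exp (- \<i> * complex_of_real c - quad_char_exponent a (complex_of_real c))"
proof -
  have "(\<integral>y. std_normal_density y *\<^sub>R cis (a * y + c * (y^2 - 1)) \<partial>lborel)
      = (\<integral>y. exp (- \<i> * complex_of_real c) * (complex_of_real (std_normal_density y)
                * (complex_of_real y ^ 0 * quad_phase a c y)) \<partial>lborel)"
    by (intro Bochner_Integration.integral_cong refl)
       (simp add: cis_conv_exp quad_phase_def scaleR_conv_of_real exp_add[symmetric] algebra_simps)
  also have "\<dots> = exp (- \<i> * complex_of_real c) * normal_quad_moment a c 0"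
    unfolding normal_quad_moment_def by simp
  finally show ?thesis
    unfolding normal_quad_moment_0_eq by (simp add: exp_diff exp_minus field_simps)
qed

section \<open>Remainder of the second order expansion\<close>

lemma closed_segment_0_of_realE:
  assumes "z \<in> closed_segment 0 (complex_of_real c)"
  obtains t where "z = complex_of_real t" "\<bar>t\<bar> \<le> \<bar>c\<bar>"
proof -
  from assms obtain u where u: "0 \<le> u" "u \<le> 1" "z = u *\<^sub>R complex_of_real c"
    unfolding closed_segment_def by auto
  then have "z = complex_of_real (u * c)" "\<bar>u * c\<bar> \<le> \<bar>c\<bar>"
    by (simp_all add: scaleR_conv_of_real abs_mult mult_left_le_one_le)
  then show ?thesis
    using that by blast
qed

lemma norm_Ln_one_minus_2i_cubic_remainder:
  "norm (- \<i> * complex_of_real c - Ln (1 - 2 * \<i> * complex_of_real c) / 2 + complex_of_real c ^ 2)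
     \<le> 4 * \<bar>c\<bar>^3"
proof -
  define F where "F z = - \<i> * z - Ln (1 - 2 * \<i> * z) / 2 + z^2" for z
  let ?S = "closed_segment 0 (complex_of_real c)"
  have F'_eq: "- \<i> - inverse (1 - 2 * \<i> * z) * (- 2 * \<i>) / 2 + 2 * z = - 4 * \<i> * z^2 / (1 - 2 * \<i> * z)"
    if "1 - 2 * \<i> * z \<noteq> 0" for z :: complex
  proof -
    define S where "S = 1 - 2 * \<i> * z"
    have "S \<noteq> 0"
      using that unfolding S_def .
    then have "(- \<i> - inverse S * (- 2 * \<i>) / 2 + 2 * z) * S = (- \<i> + 2 * z) * S + \<i>"
      by (simp add: algebra_simps)
    also have "\<dots> = - 4 * \<i> * z^2"
      unfolding S_def by (simp add: algebra_simps power2_eq_square)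
    finally show ?thesis
      unfolding S_def[symmetric] by (rule eq_divide_imp[OF \<open>S \<noteq> 0\<close>])
  qed
  have "norm (F (complex_of_real c) - F 0) \<le> 4 * c^2 * norm (complex_of_real c - 0)"
  proof (rule field_differentiable_bound[where f' = "\<lambda>z. - 4 * \<i> * z^2 / (1 - 2 * \<i> * z)"])
    fix z assume "z \<in> ?S"
    then obtain t where t: "z = complex_of_real t" "\<bar>t\<bar> \<le> \<bar>c\<bar>"
      by (rule closed_segment_0_of_realE)
    have s: "((\<lambda>z. 1 - 2 * \<i> * z) has_field_derivative - 2 * \<i>) (at z)"
      by (auto intro!: derivative_eq_intros)
    have "1 - 2 * \<i> * z \<notin> \<real>\<^sub>\<le>\<^sub>0"
      using one_minus_2i_of_real_notin_nonpos_Reals[of t] t(1) by simp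
    from DERIV_chain2[OF has_field_derivative_Ln[OF this] s]
    have "((\<lambda>z. Ln (1 - 2 * \<i> * z)) has_field_derivative inverse (1 - 2 * \<i> * z) * (- 2 * \<i>)) (at z)" .
    moreover have "((\<lambda>z. z^2) has_field_derivative 2 * z) (at z)"
      by (auto intro!: derivative_eq_intros)
    ultimately have "(F has_field_derivative - \<i> * 1 - inverse (1 - 2 * \<i> * z) * (- 2 * \<i>) / 2 + 2 * z) (at z)"
      unfolding F_def[abs_def] by (intro DERIV_add DERIV_diff DERIV_cmult DERIV_cdivide DERIV_ident)
    then show "(F has_field_derivative - 4 * \<i> * z^2 / (1 - 2 * \<i> * z)) (at z within ?S)"
      using F'_eq[of z] one_minus_2i_of_real_neq_0[of t] t(1) by (simp add: has_field_derivative_at_within)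
    have "norm (- 4 * \<i> * z^2 / (1 - 2 * \<i> * z)) = 4 * t^2 / norm (1 - 2 * \<i> * complex_of_real t)"
      using t by (simp add: norm_divide norm_mult norm_power)
    also have "\<dots> \<le> 4 * t^2"
      using norm_one_minus_2i_of_real_ge_1[of t] by (simp add: divide_le_eq mult_le_cancel_left1 mult_left_le)
    also have "\<dots> \<le> 4 * c^2"
      using t(2) by (simp add: abs_le_square_iff)
    finally show "norm (- 4 * \<i> * z^2 / (1 - 2 * \<i> * z)) \<le> 4 * c^2" .
  qed auto
  then show ?thesis
    by (simp add: F_def power3_eq_cube power2_eq_square abs_mult mult.assoc)
qed

lemma norm_quad_char_exponent_remainder:
  "norm (- \<i> * complex_of_real c - quad_char_exponent a (complex_of_real c) + complex_of_real (a^2 / 2 + c^2))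
     \<le> 4 * \<bar>c\<bar>^3 + a^2 * \<bar>c\<bar>"
proof -
  let ?s = "1 - 2 * \<i> * complex_of_real c"
  have "norm (1 - inverse ?s) = norm ((?s - 1) / ?s)"
    using one_minus_2i_of_real_neq_0[of c] by (simp add: field_simps)
  also have "\<dots> = 2 * \<bar>c\<bar> / norm ?s"
    by (simp add: norm_divide norm_mult)
  also have "\<dots> \<le> 2 * \<bar>c\<bar>"
    using norm_one_minus_2i_of_real_ge_1[of c] by (simp add: divide_le_eq mult_le_cancel_left1 mult_left_le)
  finally have "a^2 / 2 * norm (1 - inverse ?s) \<le> a^2 / 2 * (2 * \<bar>c\<bar>)"
    by (rule mult_left_mono) simp
  then have "norm (complex_of_real a ^ 2 / 2 * (1 - inverse ?s)) \<le> a^2 * \<bar>c\<bar>"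
    by (simp add: norm_mult norm_power)
  moreover have "- \<i> * complex_of_real c - quad_char_exponent a (complex_of_real c) + complex_of_real (a^2 / 2 + c^2)
      = (- \<i> * complex_of_real c - Ln ?s / 2 + complex_of_real c ^ 2) + complex_of_real a ^ 2 / 2 * (1 - inverse ?s)"
    by (simp add: quad_char_exponent_def algebra_simps)
  ultimately show ?thesis
    using norm_Ln_one_minus_2i_cubic_remainder[of c] norm_triangle_le add_mono by metis
qed

lemma eps_exponent_eq:
  assumes "N \<ge> 1"
  shows "real N * (4 * \<bar>w3 / sqrt (2 * real N)\<bar>^3 + (w2 / sqrt (real N))^2 * \<bar>w3 / sqrt (2 * real N)\<bar>)
       = \<bar>w3\<bar> * sqrt (2 / real N) * (w2^2 / 2 + w3^2)"
proof -
  define r where "r = sqrt (real N)"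
  define q where "q = sqrt (2::real)"
  have r: "r > 0"
    unfolding r_def using assms by simp
  have q: "q > 0" "q^2 = 2"
    unfolding q_def by simp_all
  have N: "real N = r^2"
    unfolding r_def by simp
  have s1: "sqrt (2 * real N) = q * r" and s2: "sqrt (2 / real N) = q / r"
    unfolding q_def r_def by (simp_all add: real_sqrt_mult real_sqrt_divide)
  have q3: "4 / q^3 = q" and q1: "1 / q = q / 2"
    using q by (simp_all add: power3_eq_cube field_simps power2_eq_square)
  have "real N * (4 * \<bar>w3 / sqrt (2 * real N)\<bar>^3 + (w2 / sqrt (real N))^2 * \<bar>w3 / sqrt (2 * real N)\<bar>)
      = (4 / q^3) * (\<bar>w3\<bar>^3 / r) + (1 / q) * (w2^2 * \<bar>w3\<bar> / r)"
    unfolding s1 r_def[symmetric] unfolding N using r q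
    by (simp add: abs_mult power_divide field_simps power2_eq_square power3_eq_cube)
  also have "\<dots> = \<bar>w3\<bar> * sqrt (2 / real N) * (w2^2 / 2 + w3^2)"
    unfolding q3 q1 s2 using r by (simp add: field_simps power3_eq_cube power2_eq_square)
  finally show ?thesis .
qed

lemma char_product_eq_gaussian_times_exp:
  fixes N :: nat and w1 w2 w3 :: real
  assumes "N \<ge> 1"
  defines "a \<equiv> w2 / sqrt (real N)" and "c \<equiv> w3 / sqrt (2 * real N)" and "t \<equiv> w1 / sqrt (real N + 1)"
  shows "exp (- \<i> * complex_of_real c - quad_char_exponent a (complex_of_real c)) ^ N
           * exp (- quad_char_exponent t 0) ^ (N + 1)
         = complex_of_real (exp (- (w1^2 + w2^2 + w3^2) / 2))
           * exp (of_nat N * (- \<i> * complex_of_real c - quad_char_exponent a (complex_of_real c)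
                              + complex_of_real (a^2 / 2 + c^2)))"
proof -
  define X where "X = - (w1^2 + w2^2 + w3^2) / 2"
  define R where "R = - \<i> * complex_of_real c - quad_char_exponent a (complex_of_real c)
                      + complex_of_real (a^2 / 2 + c^2)"
  have "real N > 0"
    using assms(1) by simp
  then have sq: "(real N + 1) * t^2 = w1^2" "real N * a^2 = w2^2" "2 * real N * c^2 = w3^2"
    unfolding a_def c_def t_def by (simp_all add: power_divide)
  have "real N * (a^2 / 2 + c^2) + (real N + 1) * (t^2 / 2)
      = (real N * a^2) / 2 + (2 * real N * c^2) / 2 + ((real N + 1) * t^2) / 2"
    by (simp add: algebra_simps)
  also have "\<dots> = - X"
    unfolding sq X_def by (simp add: field_simps)
  finally have X_eq: "real N * (a^2 / 2 + c^2) + (real N + 1) * (t^2 / 2) = - X" .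
  have L: "R - complex_of_real (a^2 / 2 + c^2) = - \<i> * complex_of_real c - quad_char_exponent a (complex_of_real c)"
    by (simp add: R_def)
  have T: "quad_char_exponent t 0 = complex_of_real (t^2 / 2)"
    by (simp add: quad_char_exponent_def)
  have "exp (- \<i> * complex_of_real c - quad_char_exponent a (complex_of_real c)) ^ N
          * exp (- quad_char_exponent t 0) ^ (N + 1)
      = exp (of_nat N * (R - complex_of_real (a^2 / 2 + c^2)) + of_nat (N + 1) * - complex_of_real (t^2 / 2))"
    unfolding exp_add exp_of_nat_mult L T ..
  also have "\<dots> = exp (of_nat N * R - complex_of_real (real N * (a^2 / 2 + c^2) + (real N + 1) * (t^2 / 2)))"
    by (simp add: algebra_simps)
  also have "\<dots> = complex_of_real (exp X) * exp (of_nat N * R)"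
    unfolding X_eq by (simp add: exp_add exp_of_real mult.commute)
  finally show ?thesis
    unfolding X_def R_def .
qed

lemma norm_char_product_minus_gaussian:
  fixes N :: nat and w1 w2 w3 :: real
  assumes "N \<ge> 1"
  defines "a \<equiv> w2 / sqrt (real N)" and "c \<equiv> w3 / sqrt (2 * real N)" and "t \<equiv> w1 / sqrt (real N + 1)"
  shows "cmod (exp (- \<i> * complex_of_real c - quad_char_exponent a (complex_of_real c)) ^ N
                 * exp (- quad_char_exponent t 0) ^ (N + 1)
               - complex_of_real (exp (- (w1^2 + w2^2 + w3^2) / 2)))
         \<le> eps_bound N w1 w2 w3 * exp (- (w1^2 + w2^2 + w3^2) / 2)"
proof -
  define X where "X = - (w1^2 + w2^2 + w3^2) / 2"
  define D where "D = of_nat N * (- \<i> * complex_of_real c - quad_char_exponent a (complex_of_real c)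
                                 + complex_of_real (a^2 / 2 + c^2))"
  define \<alpha> where "\<alpha> = \<bar>w3\<bar> * sqrt (2 / real N) * (w2^2 / 2 + w3^2)"
  have "norm D \<le> real N * (4 * \<bar>c\<bar>^3 + a^2 * \<bar>c\<bar>)"
    unfolding D_def norm_mult norm_of_nat
    by (rule mult_left_mono[OF norm_quad_char_exponent_remainder]) simp
  also have "\<dots> = \<alpha>"
    unfolding \<alpha>_def a_def c_def using eps_exponent_eq[OF assms(1)] by simp
  finally have D_le: "norm D \<le> \<alpha>" .
  then have "0 \<le> \<alpha>"
    using norm_ge_zero[of D] by linarith
  have "exp (- \<i> * complex_of_real c - quad_char_exponent a (complex_of_real c)) ^ N
          * exp (- quad_char_exponent t 0) ^ (N + 1) = complex_of_real (exp X) * exp D"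
    unfolding X_def D_def a_def c_def t_def by (rule char_product_eq_gaussian_times_exp[OF assms(1)])
  then have "cmod (exp (- \<i> * complex_of_real c - quad_char_exponent a (complex_of_real c)) ^ N
                 * exp (- quad_char_exponent t 0) ^ (N + 1) - complex_of_real (exp X))
      = cmod (complex_of_real (exp X) * (exp D - 1))"
    by (simp add: algebra_simps)
  also have "\<dots> = exp X * norm (exp D - 1)"
    by (simp add: norm_mult)
  also have "\<dots> \<le> exp X * (norm D * exp (norm D))"
    using Taylor_exp_field[of D 0] by (simp add: mult.commute)
  also have "\<dots> \<le> exp X * (\<alpha> * exp \<alpha>)"
    using D_le \<open>0 \<le> \<alpha>\<close> by (intro mult_left_mono mult_mono) auto
  finally show ?thesis
    unfolding eps_bound_def \<alpha>_def X_def Let_def by (simp add: mult.commute)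
qed

section \<open>Independent sums\<close>

lemma (in prob_space) integral_cis_sum_indep:
  assumes indep: "indep_vars (\<lambda>_. borel) X I" and "finite I"
    and f: "\<And>i. i \<in> I \<Longrightarrow> f i \<in> borel_measurable borel"
  shows "(\<integral>\<omega>. cis (\<Sum>i\<in>I. f i (X i \<omega>)) \<partial>M) = (\<Prod>i\<in>I. \<integral>\<omega>. cis (f i (X i \<omega>)) \<partial>M)"
proof -
  have "indep_vars (\<lambda>_. borel) (\<lambda>i \<omega>. cis (f i (X i \<omega>))) I"
    using f by (intro indep_vars_compose2[OF indep]) (simp add: cis_conv_exp)
  moreover have "integrable M (\<lambda>\<omega>. cis (f i (X i \<omega>)))" if "i \<in> I" for i
  proof (rule integrable_const_bound[where B = 1])
    have [measurable]: "X i \<in> borel_measurable M" "f i \<in> borel_measurable borel"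
      using indep f that unfolding indep_vars_def by auto
    show "(\<lambda>\<omega>. cis (f i (X i \<omega>))) \<in> borel_measurable M"
      unfolding cis_conv_exp by measurable
  qed simp
  ultimately have "(\<integral>\<omega>. (\<Prod>i\<in>I. cis (f i (X i \<omega>))) \<partial>M) = (\<Prod>i\<in>I. \<integral>\<omega>. cis (f i (X i \<omega>)) \<partial>M)"
    using \<open>finite I\<close> by (intro indep_vars_lebesgue_integral)
  moreover have "cis (\<Sum>i\<in>I. g i) = (\<Prod>i\<in>I. cis (g i))" for g :: "_ \<Rightarrow> real"
    using \<open>finite I\<close> by (simp add: cis_conv_exp of_real_sum sum_distrib_left exp_sum)
  ultimately show ?thesis
    by simp
qed

lemma integral_distributed_density:
  fixes g :: "'b \<Rightarrow> 'c::{banach, second_countable_topology}"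
  assumes "distributed M N X (\<lambda>x. ennreal (p x))" and "p \<in> borel_measurable N" and "\<And>x. 0 \<le> p x"
    and "g \<in> borel_measurable N"
  shows "(\<integral>\<omega>. g (X \<omega>) \<partial>M) = (\<integral>y. p y *\<^sub>R g y \<partial>N)"
proof -
  have "(\<integral>\<omega>. g (X \<omega>) \<partial>M) = integral\<^sup>L (distr M N X) g"
    using distributed_measurable[OF assms(1)] assms(4) by (simp add: integral_distr)
  also have "\<dots> = integral\<^sup>L (density N (\<lambda>x. ennreal (p x))) g"
    unfolding distributed_distr_eq_density[OF assms(1)] ..
  also have "\<dots> = (\<integral>y. p y *\<^sub>R g y \<partial>N)"
    using assms(2-4) by (simp add: integral_density)
  finally show ?thesis .
qed

lemma weighted_statistic_eq_sum:
  "w1 * Zhat N Z x + w2 * Zcheck N Z x + w3 * Ztilde N Z x =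
     (\<Sum>i\<in>{1..2*N+1}. if i \<le> N
        then w2 / sqrt (real N) * Z i x + w3 / sqrt (2 * real N) * ((Z i x)^2 - 1)
        else w1 / sqrt (real N + 1) * Z i x)"
proof -
  have "(\<Sum>i=1..N+1. Z (N+i) x) = (\<Sum>i\<in>plus N ` {1..N+1}. Z i x)"
    by (subst sum.reindex) (simp_all add: comp_def)
  also have "plus N ` {1..N+1} = {N+1..2*N+1}"
    by (simp add: mult_2)
  finally have hat: "w1 * Zhat N Z x = (\<Sum>i\<in>{N+1..2*N+1}. w1 / sqrt (real N + 1) * Z i x)"
    unfolding Zhat_def by (simp only: times_divide_eq_right sum_distrib_left sum_divide_distrib) (auto intro!: sum.cong)
  have check_tilde: "w2 * Zcheck N Z x + w3 * Ztilde N Z x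
      = (\<Sum>i\<in>{1..N}. w2 / sqrt (real N) * Z i x + w3 / sqrt (2 * real N) * ((Z i x)^2 - 1))"
    unfolding Zcheck_def Ztilde_def
    by (simp add: sum_distrib_left sum_divide_distrib sum.distrib real_sqrt_mult)
  have low: "{1..2*N+1} \<inter> {i. i \<le> N} = {1..N}" and high: "{1..2*N+1} \<inter> - {i. i \<le> N} = {N+1..2*N+1}"
    by auto
  show ?thesis
    unfolding sum.If_cases[OF finite_atLeastAtMost] low high using hat check_tilde by linarith
qed

theorem mainTheorem20:
  fixes M :: "'a measure" and Z :: "nat \<Rightarrow> 'a \<Rightarrow> real" and N :: nat
    and w1 w2 w3 :: real
  assumes "prob_space M"
    and "N \<ge> 1"
    and "prob_space.indep_vars M (\<lambda>_. borel) Z {1..2*N+1}"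
    and "\<And>i. i \<in> {1..2*N+1} \<Longrightarrow> distributed M lborel (Z i) std_normal_density"
  shows "cmod ((\<integral>x. cis (w1 * Zhat N Z x + w2 * Zcheck N Z x + w3 * Ztilde N Z x) \<partial>M)
              - complex_of_real (exp (- (w1^2 + w2^2 + w3^2) / 2)))
         \<le> eps_bound N w1 w2 w3 * exp (- (w1^2 + w2^2 + w3^2) / 2)"
proof -
  interpret prob_space M by fact
  define a c t where "a = w2 / sqrt (real N)" and "c = w3 / sqrt (2 * real N)" and "t = w1 / sqrt (real N + 1)"
  define \<theta> where "\<theta> i y = (if i \<le> N then a * y + c * (y^2 - 1) else t * y)" for i y
  have low: "(\<integral>y. std_normal_density y *\<^sub>R cis (\<theta> i y) \<partial>lborel)
      = exp (- \<i> * complex_of_real c - quad_char_exponent a (complex_of_real c))" if "i \<in> {1..N}" for i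
    using that std_normal_char_quadratic[of a c] by (simp add: \<theta>_def)
  have high: "(\<integral>y. std_normal_density y *\<^sub>R cis (\<theta> i y) \<partial>lborel) = exp (- quad_char_exponent t 0)"
    if "i \<in> {N+1..2*N+1}" for i
    using that std_normal_char_quadratic[of t 0] by (simp add: \<theta>_def)
  have split: "{1..2*N+1} = {1..N} \<union> {N+1..2*N+1}"
    by auto
  have "(\<integral>x. cis (w1 * Zhat N Z x + w2 * Zcheck N Z x + w3 * Ztilde N Z x) \<partial>M)
      = (\<integral>x. cis (\<Sum>i\<in>{1..2*N+1}. \<theta> i (Z i x)) \<partial>M)"
    unfolding weighted_statistic_eq_sum \<theta>_def a_def c_def t_def ..
  also have "\<dots> = (\<Prod>i\<in>{1..2*N+1}. \<integral>x. cis (\<theta> i (Z i x)) \<partial>M)"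
    by (rule integral_cis_sum_indep[OF assms(3)]) (simp_all add: \<theta>_def)
  also have "\<dots> = (\<Prod>i\<in>{1..2*N+1}. \<integral>y. std_normal_density y *\<^sub>R cis (\<theta> i y) \<partial>lborel)"
    by (intro prod.cong refl integral_distributed_density assms(4)) (simp_all add: \<theta>_def cis_conv_exp)
  also have "\<dots> = exp (- \<i> * complex_of_real c - quad_char_exponent a (complex_of_real c)) ^ N
                  * exp (- quad_char_exponent t 0) ^ (N + 1)"
    unfolding split by (simp add: prod.union_disjoint low high)
  finally have char_eq: "(\<integral>x. cis (w1 * Zhat N Z x + w2 * Zcheck N Z x + w3 * Ztilde N Z x) \<partial>M)
      = exp (- \<i> * complex_of_real c - quad_char_exponent a (complex_of_real c)) ^ N
        * exp (- quad_char_exponent t 0) ^ (N + 1)" .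
  show ?thesis
    unfolding char_eq a_def c_def t_def by (rule norm_char_product_minus_gaussian[OF assms(2)])
qed

end
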